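(* Let $\mathcal H=\mathbb C^2$. (1) If $c$ and $T$ are operators on $\mathcal H$ with $\{c,c^\dagger\}=\mathbb 1$, $c^2=0$, and $T=T^\dagger$ strictly positive, then $a:=TcT^{-1}$ and $b:=Tc^\dagger T^{-1}$ satisfy $\{a,b\}=\mathbb 1$, $a^2=0$, $b^2=0$. (2) Conversely, if $a,b$ are operators on $\mathcal H=\mathbb C^2$ with $\{a,b\}=\mathbb 1$, $a^2=0$, $b^2=0$, then there exist operators $c$ and $T$ on $\mathcal H$ with $\{c,c^\dagger\}=\mathbb 1$, $c^2=0$, $T=T^\dagger$ strictly positive, such that $a=TcT^{-1}$ and $b=Tc^\dagger T^{-1}$.
   Context: $\{x,y\}=xy+yx$ denotes the anticommutator; $\mathbb 1$ is the identity on $\mathbb C^2$; operators on $\mathbb C^2$ are $2\times2$ complex matrices and $^\dagger$ denotes the adjoint with respect to the standard inner product. *)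

theory Defs
  imports "HOL-Analysis.Analysis"
begin

type_synonym op2 = "complex ^ 2 ^ 2"

definition adj :: "op2 \<Rightarrow> op2" where
  "adj A = (\<chi> i j. cnj (A $ j $ i))"

definition anticomm :: "op2 \<Rightarrow> op2 \<Rightarrow> op2" where
  "anticomm x y = x ** y + y ** x"

definition cinner2 :: "complex ^ 2 \<Rightarrow> complex ^ 2 \<Rightarrow> complex" where
  "cinner2 v w = (\<Sum>i\<in>UNIV. cnj (v $ i) * w $ i)"

definition strictly_positive :: "op2 \<Rightarrow> bool" where
  "strictly_positive T \<longleftrightarrow>
     (\<forall>v. v \<noteq> 0 \<longrightarrow> Im (cinner2 v (T *v v)) = 0 \<and> Re (cinner2 v (T *v v)) > 0)"

end

theory Submission
  imports Defs
begin

text \<open>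
  Conjugation by an invertible T is an algebra automorphism, so it preserves the relations
  \<open>{a,b} = 1\<close>, \<open>a\<^sup>2 = b\<^sup>2 = 0\<close>; for part (1) it remains to note that
  \<open>(c\<^sup>\<dagger>)\<^sup>2 = (c\<^sup>2)\<^sup>\<dagger> = 0\<close>.

  For part (2), take \<open>y \<noteq> 0\<close> in the range of b and put \<open>x = a y\<close>. Then
  \<open>a x = 0\<close>, \<open>a y = x\<close>, \<open>b x = y\<close>, \<open>b y = 0\<close>, and x, y form a basis of \<open>\<complex>\<^sup>2\<close>.
  The positive operator \<open>M = |x\<rangle>\<langle>x| + |y\<rangle>\<langle>y|\<close> intertwines: \<open>b M = M a\<^sup>\<dagger>\<close>.
  If T is the positive square root of M and \<open>c = T\<^sup>-\<^sup>1 a T\<close>, then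
  \<open>c\<^sup>\<dagger> = T a\<^sup>\<dagger> T\<^sup>-\<^sup>1 = T\<^sup>-\<^sup>1 M a\<^sup>\<dagger> T\<^sup>-\<^sup>1 = T\<^sup>-\<^sup>1 b T\<close>, so c and \<open>c\<^sup>\<dagger>\<close> satisfy the relations
  because a and b do. For 2\<times>2 matrices the square root is explicit: by Cayley-Hamilton,
  \<open>(M + \<surd>(det M))\<^sup>2 = (tr M + 2\<surd>(det M)) M\<close>.
\<close>

lemma matrix_inv_right:
  fixes A :: "'a::semiring_1^'n^'m"
  assumes "invertible A"
  shows "A ** matrix_inv A = mat 1"
  using someI_ex[OF assms[unfolded invertible_def]] by (simp add: matrix_inv_def)

lemma matrix_inv_left:
  fixes A :: "'a::semiring_1^'n^'m"
  assumes "invertible A"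
  shows "matrix_inv A ** A = mat 1"
  using someI_ex[OF assms[unfolded invertible_def]] by (simp add: matrix_inv_def)

lemma matrix_add_rdistrib: "((A::'a::semiring_1^'n^'m) + B) ** C = A ** C + B ** C"
  by (simp add: matrix_matrix_mult_def vec_eq_iff sum.distrib distrib_right)

lemma scaleR_matrix_vector_mult: "(r *\<^sub>R A) *v v = r *\<^sub>R (A *v (v::'a::real_algebra_1^'n))"
  by (simp add: matrix_vector_mult_def vec_eq_iff scaleR_sum_right)

lemma mat_of_real_mult: "mat (of_real r) ** (A::'a::real_algebra_1^'n^'n) = r *\<^sub>R A"
proof -
  have "mat (of_real r) = r *\<^sub>R (mat 1 :: 'a^'n^'n)"
    by (simp add: mat_def vec_eq_iff of_real_def)
  then show ?thesis by (simp flip: scalar_matrix_assoc)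
qed

lemma matrix_square_add_scaleR_id:
  fixes M :: "'a::real_algebra_1^'n^'n"
  shows "(M + s *\<^sub>R mat 1) ** (M + s *\<^sub>R mat 1) = M ** M + (2 * s) *\<^sub>R M + s\<^sup>2 *\<^sub>R mat 1"
proof -
  have "M ** (s *\<^sub>R mat 1) = s *\<^sub>R M" "(s *\<^sub>R mat 1) ** M = s *\<^sub>R M"
      "(s *\<^sub>R mat 1) ** (s *\<^sub>R mat 1) = s\<^sup>2 *\<^sub>R (mat 1 :: 'a^'n^'n)"
    by (simp_all add: matrix_scalar_ac power2_eq_square flip: scalar_matrix_assoc)
  moreover have "(2 * s) *\<^sub>R M = s *\<^sub>R M + s *\<^sub>R M"
    by (simp flip: scaleR_add_left)
  ultimately show ?thesis
    by (simp add: matrix_add_ldistrib matrix_add_rdistrib add_ac)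
qed

lemma cayley_hamilton_2:
  fixes M :: "'a::comm_ring_1^2^2"
  shows "M ** M = mat (trace M) ** M - mat (det M)"
  by (simp add: vec_eq_iff forall_2 matrix_matrix_mult_def sum_2 mat_def trace_def det_2 algebra_simps)

lemma ladder_independent:
  fixes b :: "'a::idom^2^2"
  assumes "b *v x = y" "b *v y = 0" "y \<noteq> 0"
  shows "x$1 * y$2 \<noteq> x$2 * y$1"
proof
  assume dep: "x$1 * y$2 = x$2 * y$1"
  have bx: "b$1$1 * x$1 + b$1$2 * x$2 = y$1" "b$2$1 * x$1 + b$2$2 * x$2 = y$2"
    using assms(1) by (simp_all add: vec_eq_iff forall_2 matrix_vector_mult_def sum_2)
  have by0: "b$1$1 * y$1 + b$1$2 * y$2 = 0" "b$2$1 * y$1 + b$2$2 * y$2 = 0"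
    using assms(2) by (simp_all add: vec_eq_iff forall_2 matrix_vector_mult_def sum_2)
  have "y$1 * y$1 = 0" "y$2 * y$2 = 0" using dep bx by0 by algebra+
  then have "y = 0" by (simp add: vec_eq_iff forall_2)
  with assms(3) show False ..
qed

lemma conjugate_mult:
  fixes S T X Y :: "'a::semiring_1^'n^'n"
  assumes "S ** T = mat 1"
  shows "(T ** X ** S) ** (T ** Y ** S) = T ** (X ** Y) ** S"
proof -
  have "(T ** X ** S) ** (T ** Y ** S) = T ** X ** (S ** T) ** Y ** S"
    by (simp add: matrix_mul_assoc)
  then show ?thesis by (simp add: assms matrix_mul_assoc)
qed

lemma conjugate_add:
  fixes S T X Y :: "'a::semiring_1^'n^'n"
  shows "T ** (X + Y) ** S = T ** X ** S + T ** Y ** S"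
  by (simp add: matrix_add_ldistrib matrix_add_rdistrib)

lemma conjugate_cancel:
  fixes S T X :: "'a::field^'n^'n"
  assumes "S ** T = mat 1"
  shows "T ** (S ** X ** T) ** S = X"
proof -
  have "T ** (S ** X ** T) ** S = (T ** S) ** X ** (T ** S)"
    by (simp add: matrix_mul_assoc)
  moreover have "T ** S = mat 1"
    using assms matrix_left_right_inverse by blast
  ultimately show ?thesis by simp
qed

section \<open>Adjoints and positivity\<close>

lemma adj_mult: "adj (A ** B) = adj B ** adj A"
  by (simp add: adj_def matrix_matrix_mult_def vec_eq_iff sum_2 mult.commute)

lemma adj_add: "adj (A + B) = adj A + adj B"
  by (simp add: adj_def vec_eq_iff)

lemma adj_scaleR: "adj (r *\<^sub>R A) = r *\<^sub>R adj A"
  by (simp add: adj_def vec_eq_iff)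

lemma adj_mat_1 [simp]: "adj (mat 1) = mat 1"
  by (simp add: adj_def vec_eq_iff mat_def)

lemma adj_0 [simp]: "adj 0 = 0"
  by (simp add: adj_def vec_eq_iff)

lemma adj_matrix_inv:
  assumes "invertible T" "adj T = T"
  shows "adj (matrix_inv T) = matrix_inv T"
proof -
  let ?S = "matrix_inv T"
  have "adj ?S ** T = mat 1"
    using adj_mult[of T ?S] assms by (simp add: matrix_inv_right)
  then have "adj ?S = adj ?S ** (T ** ?S)"
    using matrix_inv_right[OF assms(1)] by simp
  also have "\<dots> = ?S"
    by (simp add: matrix_mul_assoc \<open>adj ?S ** T = mat 1\<close>)
  finally show ?thesis .
qed

lemma cinner2_zero_right [simp]: "cinner2 v 0 = 0"
  by (simp add: cinner2_def)

lemma cinner2_add_right: "cinner2 v (w + z) = cinner2 v w + cinner2 v z"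
  by (simp add: cinner2_def sum_2 algebra_simps)

lemma cinner2_scaleR_right: "cinner2 v (r *\<^sub>R w) = r *\<^sub>R cinner2 v w"
  by (simp add: cinner2_def sum_2 scaleR_right_distrib)

lemma cinner2_self: "cinner2 v v = of_real ((cmod (v$1))\<^sup>2 + (cmod (v$2))\<^sup>2)"
  unfolding cinner2_def sum_2 of_real_add complex_norm_square by (simp add: mult.commute)

lemma strictly_positive_invertible:
  assumes "strictly_positive T"
  shows "invertible T"
proof -
  have "v = 0" if "T *v v = 0" for v
    using assms that unfolding strictly_positive_def by force
  then show ?thesis
    using invertible_left_inverse matrix_left_invertible_ker by blast
qed

lemma strictly_positive_add_id:
  assumes "strictly_positive M" "s \<ge> 0"
  shows "strictly_positive (M + s *\<^sub>R mat 1)"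
  unfolding strictly_positive_def
proof (intro allI impI)
  fix v :: "complex^2"
  assume "v \<noteq> 0"
  with assms(1) have "Im (cinner2 v (M *v v)) = 0" "Re (cinner2 v (M *v v)) > 0"
    unfolding strictly_positive_def by blast+
  moreover have "cinner2 v ((M + s *\<^sub>R mat 1) *v v) = cinner2 v (M *v v) + s *\<^sub>R cinner2 v v"
    by (simp add: matrix_vector_mult_add_rdistrib scaleR_matrix_vector_mult cinner2_add_right
        cinner2_scaleR_right)
  moreover have "s * ((cmod (v$1))\<^sup>2 + (cmod (v$2))\<^sup>2) \<ge> 0"
    using assms(2) by simp
  ultimately show "Im (cinner2 v ((M + s *\<^sub>R mat 1) *v v)) = 0 \<and>
      Re (cinner2 v ((M + s *\<^sub>R mat 1) *v v)) > 0"
    by (simp add: cinner2_self)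
qed

lemma strictly_positive_scaleR:
  assumes "strictly_positive M" "r > 0"
  shows "strictly_positive (r *\<^sub>R M)"
  using assms unfolding strictly_positive_def
  by (simp add: scaleR_matrix_vector_mult cinner2_scaleR_right)

lemma hermitian_trace_det_pos:
  fixes M :: op2
  assumes "adj M = M" "strictly_positive M"
  shows "trace M = of_real (Re (trace M))" "Re (trace M) > 0"
    and "det M = of_real (Re (det M))" "Re (det M) > 0"
proof -
  define P R q where "P = Re (M$1$1)" "R = Re (M$2$2)" "q = M$1$2"
  have entry_cnj: "cnj (M$j$i) = M$i$j" for i j
    using arg_cong[OF assms(1), of "\<lambda>A. A $ i $ j"] by (simp add: adj_def)
  then have "M$i$i \<in> \<real>" for i
    by (simp add: Reals_cnj_iff)
  then have "M$1$1 = of_real P" "M$2$2 = of_real R" "M$2$1 = cnj q"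
    unfolding P_R_q_def using entry_cnj[of 1 2] by (simp_all add: of_real_Re)
  then have M: "M = (\<chi> i j. if i = 1 then (if j = 1 then of_real P else q)
                            else (if j = 1 then cnj q else of_real R))"
    unfolding P_R_q_def by (simp add: vec_eq_iff forall_2)
  have form_pos: "Re (cinner2 v (M *v v)) > 0" if "v \<noteq> 0" for v
    using assms(2) that unfolding strictly_positive_def by blast
  have "Re (cinner2 (\<chi> i. if i = 1 then 1 else 0) (M *v (\<chi> i. if i = 1 then 1 else 0))) > 0"
    by (rule form_pos) (simp add: vec_eq_iff forall_2)
  then have "P > 0" by (simp add: M cinner2_def matrix_vector_mult_def sum_2)
  have "Re (cinner2 (\<chi> i. if i = 1 then 0 else 1) (M *v (\<chi> i. if i = 1 then 0 else 1))) > 0"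
    by (rule form_pos) (simp add: vec_eq_iff forall_2)
  then have "R > 0" by (simp add: M cinner2_def matrix_vector_mult_def sum_2)
  have "P * R - (cmod q)\<^sup>2 > 0"
  proof -
    define v :: "complex^2" where "v = (\<chi> i. if i = 1 then - q else of_real P)"
    have "v \<noteq> 0" using \<open>P > 0\<close> by (simp add: v_def vec_eq_iff forall_2)
    moreover have "cinner2 v (M *v v) = of_real (P * (P * R - (cmod q)\<^sup>2))"
      using complex_norm_square[of q]
      by (simp add: M v_def cinner2_def matrix_vector_mult_def sum_2 algebra_simps power2_eq_square)
    ultimately show ?thesis using form_pos \<open>P > 0\<close> by (force simp: zero_less_mult_iff)
  qed
  moreover have "det M = of_real (P * R - (cmod q)\<^sup>2)"
    using complex_norm_square[of q] by (simp add: M det_2)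
  moreover have "trace M = of_real (P + R)"
    by (simp add: M trace_def sum_2)
  ultimately show "trace M = of_real (Re (trace M))" "Re (trace M) > 0"
      "det M = of_real (Re (det M))" "Re (det M) > 0"
    using \<open>P > 0\<close> \<open>R > 0\<close> by simp_all
qed

lemma strictly_positive_sqrt:
  fixes M :: op2
  assumes "adj M = M" "strictly_positive M"
  obtains T where "adj T = T" "strictly_positive T" "T ** T = M"
proof -
  define \<tau> \<delta> where "\<tau> = Re (trace M)" "\<delta> = Re (det M)"
  note tr_det = hermitian_trace_det_pos[OF assms, folded \<tau>_\<delta>_def]
  define s where "s = sqrt \<delta>"
  define t where "t = sqrt (\<tau> + 2 * s)"
  have "s \<ge> 0" "s\<^sup>2 = \<delta>" using tr_det by (simp_all add: s_def)
  have "t > 0" "t\<^sup>2 = \<tau> + 2 * s" using tr_det \<open>s \<ge> 0\<close> by (simp_all add: t_def)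
  have "M ** M = \<tau> *\<^sub>R M - \<delta> *\<^sub>R mat 1"
    using cayley_hamilton_2[of M] tr_det mat_of_real_mult[of _ "mat 1"] by (simp add: mat_of_real_mult)
  have "(M + s *\<^sub>R mat 1) ** (M + s *\<^sub>R mat 1) = M ** M + (2 * s) *\<^sub>R M + s\<^sup>2 *\<^sub>R mat 1"
    by (rule matrix_square_add_scaleR_id)
  also have "\<dots> = t\<^sup>2 *\<^sub>R M"
    using \<open>M ** M = \<tau> *\<^sub>R M - \<delta> *\<^sub>R mat 1\<close> \<open>s\<^sup>2 = \<delta>\<close> \<open>t\<^sup>2 = \<tau> + 2 * s\<close>
    by (simp add: scaleR_add_left)
  finally have square: "(M + s *\<^sub>R mat 1) ** (M + s *\<^sub>R mat 1) = t\<^sup>2 *\<^sub>R M" .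
  define T where "T = (1 / t) *\<^sub>R (M + s *\<^sub>R mat 1)"
  show ?thesis
  proof
    show "adj T = T"
      by (simp add: T_def adj_scaleR adj_add assms(1))
    show "strictly_positive T"
      unfolding T_def using assms(2) \<open>s \<ge> 0\<close> \<open>t > 0\<close>
      by (simp add: strictly_positive_scaleR strictly_positive_add_id)
    show "T ** T = M"
      using \<open>t > 0\<close> by (simp add: T_def matrix_scalar_ac scalar_matrix_assoc[symmetric] square
          power2_eq_square)
  qed
qed

section \<open>Rank-one operators\<close>

definition outer :: "complex^2 \<Rightarrow> complex^2 \<Rightarrow> op2" where
  "outer u w = (\<chi> i j. u$i * cnj (w$j))"

lemma matrix_mult_outer: "A ** outer u w = outer (A *v u) w"
  by (simp add: outer_def matrix_matrix_mult_def matrix_vector_mult_def vec_eq_iff sum_2 algebra_simps)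

lemma outer_mult_adj: "outer u w ** adj A = outer u (A *v w)"
  by (simp add: outer_def adj_def matrix_matrix_mult_def matrix_vector_mult_def vec_eq_iff sum_2
      algebra_simps)

lemma outer_zero [simp]: "outer 0 w = 0" "outer u 0 = 0"
  by (simp_all add: outer_def vec_eq_iff)

lemma adj_outer: "adj (outer u w) = outer w u"
  by (simp add: outer_def adj_def vec_eq_iff mult.commute)

lemma cinner2_outer_self: "cinner2 v (outer u u *v v) = of_real ((cmod (cinner2 u v))\<^sup>2)"
  unfolding complex_norm_square
  by (simp add: outer_def cinner2_def matrix_vector_mult_def sum_2 algebra_simps)

lemma strictly_positive_outer_sum:
  assumes "x$1 * y$2 \<noteq> x$2 * y$1"
  shows "strictly_positive (outer x x + outer y y)"
  unfolding strictly_positive_def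
proof (intro allI impI)
  fix v :: "complex^2"
  assume "v \<noteq> 0"
  have "cinner2 x v \<noteq> 0 \<or> cinner2 y v \<noteq> 0"
  proof (rule ccontr)
    assume "\<not> ?thesis"
    then have "cnj (x$1) * v$1 + cnj (x$2) * v$2 = 0" "cnj (y$1) * v$1 + cnj (y$2) * v$2 = 0"
      by (simp_all add: cinner2_def sum_2)
    then have "v$1 * cnj (x$1 * y$2 - x$2 * y$1) = 0" "v$2 * cnj (x$1 * y$2 - x$2 * y$1) = 0"
      by (simp, algebra)+
    moreover have "cnj (x$1 * y$2 - x$2 * y$1) \<noteq> 0"
      using assms unfolding complex_cnj_zero_iff by simp
    ultimately have "v = 0" by (simp add: vec_eq_iff forall_2)
    with \<open>v \<noteq> 0\<close> show False ..
  qed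
  then have "(cmod (cinner2 x v))\<^sup>2 + (cmod (cinner2 y v))\<^sup>2 > 0"
    by (auto simp: add_pos_nonneg add_nonneg_pos)
  then show "Im (cinner2 v ((outer x x + outer y y) *v v)) = 0 \<and>
      Re (cinner2 v ((outer x x + outer y y) *v v)) > 0"
    by (simp add: matrix_vector_mult_add_rdistrib cinner2_add_right cinner2_outer_self)
qed

section \<open>Pairs satisfying the canonical anticommutation relations\<close>

definition car_pair :: "op2 \<Rightarrow> op2 \<Rightarrow> bool" where
  "car_pair a b \<longleftrightarrow> anticomm a b = mat 1 \<and> a ** a = 0 \<and> b ** b = 0"

lemma anticomm_conjugate:
  assumes "S ** T = mat 1"
  shows "anticomm (T ** X ** S) (T ** Y ** S) = T ** anticomm X Y ** S"
  unfolding anticomm_def by (simp add: conjugate_mult[OF assms] conjugate_add)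

lemma car_pair_conjugate:
  assumes "S ** T = mat 1" "car_pair a b"
  shows "car_pair (T ** a ** S) (T ** b ** S)"
proof -
  have "T ** S = mat 1" using assms(1) matrix_left_right_inverse by blast
  with assms show ?thesis
    unfolding car_pair_def by (simp add: anticomm_conjugate conjugate_mult)
qed

lemma car_pair_adj:
  assumes "anticomm c (adj c) = mat 1" "c ** c = 0"
  shows "car_pair c (adj c)"
  using assms adj_mult[of c c] unfolding car_pair_def by simp

lemma car_pair_ladder:
  assumes "car_pair a b"
  obtains x y where "a *v x = 0" "a *v y = x" "b *v x = y" "b *v y = 0" "x$1 * y$2 \<noteq> x$2 * y$1"
proof -
  have ab: "a ** b + b ** a = mat 1" "a ** a = 0" "b ** b = 0"
    using assms unfolding car_pair_def anticomm_def by auto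
  have "b \<noteq> 0"
  proof
    assume "b = 0"
    with ab(1) have "(mat 1 :: op2) $ 1 $ 1 = 0" by simp
    then show False by (simp add: mat_def)
  qed
  then obtain z where "b *v z \<noteq> 0" using matrix_eq[of b 0] by auto
  define y where "y = b *v z"
  define x where "x = a *v y"
  have "b *v y = 0" by (simp add: y_def matrix_vector_mul_assoc ab(3))
  have "a *v x = 0" by (simp add: x_def matrix_vector_mul_assoc ab(2))
  have "y = (a ** b + b ** a) *v y" using ab(1) by simp
  also have "\<dots> = b *v x"
    by (simp add: x_def matrix_vector_mult_add_rdistrib \<open>b *v y = 0\<close>
        flip: matrix_vector_mul_assoc)
  finally have "b *v x = y" ..
  have "y \<noteq> 0" using \<open>b *v z \<noteq> 0\<close> y_def by simp
  with \<open>b *v x = y\<close> \<open>b *v y = 0\<close> have "x$1 * y$2 \<noteq> x$2 * y$1"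
    by (rule ladder_independent)
  with that show ?thesis
    using \<open>a *v x = 0\<close> x_def \<open>b *v x = y\<close> \<open>b *v y = 0\<close> by blast
qed

lemma adj_conjugate_of_intertwiner:
  fixes a b T :: op2
  assumes "adj T = T" "invertible T" "b ** (T ** T) = (T ** T) ** adj a"
  shows "adj (matrix_inv T ** a ** T) = matrix_inv T ** b ** T"
proof -
  let ?S = "matrix_inv T"
  have ST: "?S ** T = mat 1" using assms(2) by (rule matrix_inv_left)
  have TS: "X ** T ** ?S = X" for X
    using matrix_inv_right[OF assms(2)] by (simp flip: matrix_mul_assoc)
  have "adj (?S ** a ** T) = T ** adj a ** ?S"
    by (simp add: adj_mult assms(1) adj_matrix_inv[OF assms(2,1)] matrix_mul_assoc)
  also have "\<dots> = ?S ** ((T ** T) ** adj a) ** ?S"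
    by (simp add: matrix_mul_assoc ST)
  also have "\<dots> = ?S ** (b ** (T ** T)) ** ?S"
    by (simp add: assms(3))
  also have "\<dots> = ?S ** b ** T"
    by (simp add: matrix_mul_assoc TS)
  finally show ?thesis .
qed

lemma car_pair_conjugate_to_adjoint_pair:
  assumes "car_pair a b"
  obtains c T where "car_pair c (adj c)" "adj T = T" "strictly_positive T"
    "a = T ** c ** matrix_inv T" "b = T ** adj c ** matrix_inv T"
proof -
  obtain x y where ladder: "a *v x = 0" "a *v y = x" "b *v x = y" "b *v y = 0"
      "x$1 * y$2 \<noteq> x$2 * y$1"
    using assms by (rule car_pair_ladder)
  define M where "M = outer x x + outer y y"
  have "adj M = M" by (simp add: M_def adj_add adj_outer)
  moreover have "strictly_positive M"
    unfolding M_def using ladder(5) by (rule strictly_positive_outer_sum)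
  ultimately obtain T where T: "adj T = T" "strictly_positive T" "T ** T = M"
    by (rule strictly_positive_sqrt)
  have "invertible T" using T(2) by (rule strictly_positive_invertible)
  have "b ** M = M ** adj a"
    by (simp add: M_def matrix_add_ldistrib matrix_add_rdistrib matrix_mult_outer outer_mult_adj ladder)
  define c where "c = matrix_inv T ** a ** T"
  have adj_c: "adj c = matrix_inv T ** b ** T"
    unfolding c_def using T(1,3) \<open>invertible T\<close> \<open>b ** M = M ** adj a\<close>
    by (simp add: adj_conjugate_of_intertwiner)
  have TS: "T ** matrix_inv T = mat 1" using \<open>invertible T\<close> by (rule matrix_inv_right)
  show ?thesis
  proof
    show "car_pair c (adj c)"
      unfolding adj_c unfolding c_def using TS assms by (rule car_pair_conjugate)
    show "a = T ** c ** matrix_inv T" "b = T ** adj c ** matrix_inv T"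
      unfolding adj_c unfolding c_def
      using conjugate_cancel[OF matrix_inv_left[OF \<open>invertible T\<close>]] by simp_all
  qed (use T in simp_all)
qed

theorem mainTheorem3:
  shows "(\<forall>c T :: op2.
            anticomm c (adj c) = mat 1 \<and> c ** c = 0 \<and> T = adj T \<and> strictly_positive T \<longrightarrow>
            (let a = T ** c ** matrix_inv T; b = T ** adj c ** matrix_inv T in
               anticomm a b = mat 1 \<and> a ** a = 0 \<and> b ** b = 0))
       \<and> (\<forall>a b :: op2.
            anticomm a b = mat 1 \<and> a ** a = 0 \<and> b ** b = 0 \<longrightarrow>
            (\<exists>c T :: op2. anticomm c (adj c) = mat 1 \<and> c ** c = 0 \<and> T = adj T \<and>
               strictly_positive T \<and>
               a = T ** c ** matrix_inv T \<and> b = T ** adj c ** matrix_inv T))"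
proof (intro conjI allI impI)
  fix c T :: op2
  assume "anticomm c (adj c) = mat 1 \<and> c ** c = 0 \<and> T = adj T \<and> strictly_positive T"
  then have "car_pair c (adj c)" "invertible T"
    by (simp_all add: car_pair_adj strictly_positive_invertible)
  then have "car_pair (T ** c ** matrix_inv T) (T ** adj c ** matrix_inv T)"
    using car_pair_conjugate matrix_inv_left by blast
  then show "let a = T ** c ** matrix_inv T; b = T ** adj c ** matrix_inv T in
      anticomm a b = mat 1 \<and> a ** a = 0 \<and> b ** b = 0"
    unfolding car_pair_def Let_def .
next
  fix a b :: op2
  assume "anticomm a b = mat 1 \<and> a ** a = 0 \<and> b ** b = 0"
  then have "car_pair a b" unfolding car_pair_def .
  then obtain c T where "car_pair c (adj c)" "adj T = T" "strictly_positive T"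
      "a = T ** c ** matrix_inv T" "b = T ** adj c ** matrix_inv T"
    by (rule car_pair_conjugate_to_adjoint_pair)
  then show "\<exists>c T :: op2. anticomm c (adj c) = mat 1 \<and> c ** c = 0 \<and> T = adj T \<and>
      strictly_positive T \<and> a = T ** c ** matrix_inv T \<and> b = T ** adj c ** matrix_inv T"
    unfolding car_pair_def by metis
qed

end
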